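(* Let $\kappa\ge1$, $n=2^\kappa-1$, $0<\epsilon<1$, and let $G_{\mathrm{simp}}$ be a binary $\kappa\times n$ matrix whose columns are exactly the $2^\kappa-1$ nonzero vectors of $\mathbb{F}_2^\kappa$ (the simplex code generator). Then for every binary $\kappa\times n$ matrix $G$, $\lambda(n,\epsilon,q(G_{\mathrm{simp}}))\le\lambda(n,\epsilon,q(G))$.
   Context: $W=\mathbb{F}_2^\kappa$; $\nu(i)\in W$ is the binary expansion of $i\in\{0,\dots,2^\kappa-1\}$. For a binary $\kappa\times n$ matrix $G$, $q(G)=(q_0,\dots,q_{2^\kappa-1})$ with $q_i$ the number of columns of $G$ equal to $\nu(i)$ divided by $n$. For a subspace $S\subseteq W$, $\zeta(S,q)=\sum_{i:\nu(i)\in S}q_i$; $\Xi(W,\kappa-1)$ is the set of $(\kappa-1)$-dimensional subspaces of $W$. $\lambda(n,\epsilon,q)=(2-\epsilon)^n2^{-\kappa}\Big(1+\sum_{S\in\Xi(W,\kappa-1)}\big(\tfrac{\epsilon}{2-\epsilon}\big)^{n(1-\zeta(S,q))}\Big)-1$, which for $q=q(G)$ is the $\chi^2$ divergence between $p_{MZ}$ and $p_Mp_Z$ for the coset code with base-code generator $G$ (uniform message) over a binary erasure channel with erasure probability $\epsilon$. *)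

theory Defs
  imports Complex_Main
begin

text \<open>Vectors of W = F_2^kappa are represented as functions nat => bool
  that vanish (are False) outside the coordinates 0..kappa-1.\<close>

definition W :: "nat \<Rightarrow> (nat \<Rightarrow> bool) set" where
  "W \<kappa> = {v. \<forall>j. \<kappa> \<le> j \<longrightarrow> \<not> v j}"

definition zerov :: "nat \<Rightarrow> bool" where
  "zerov = (\<lambda>j. False)"

definition addv :: "(nat \<Rightarrow> bool) \<Rightarrow> (nat \<Rightarrow> bool) \<Rightarrow> (nat \<Rightarrow> bool)" where
  "addv u v = (\<lambda>j. u j \<noteq> v j)"

definition nu :: "nat \<Rightarrow> nat \<Rightarrow> (nat \<Rightarrow> bool)" where
  "nu \<kappa> i = (\<lambda>j. j < \<kappa> \<and> bit i j)"

text \<open>A binary kappa x n matrix is a function G r c (row r < kappa, column c < n);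
  its c-th column as a vector of W.\<close>
definition col :: "nat \<Rightarrow> (nat \<Rightarrow> nat \<Rightarrow> bool) \<Rightarrow> nat \<Rightarrow> (nat \<Rightarrow> bool)" where
  "col \<kappa> G c = (\<lambda>r. r < \<kappa> \<and> G r c)"

definition qdist :: "nat \<Rightarrow> nat \<Rightarrow> (nat \<Rightarrow> nat \<Rightarrow> bool) \<Rightarrow> nat \<Rightarrow> real" where
  "qdist \<kappa> n G i = real (card {c. c < n \<and> col \<kappa> G c = nu \<kappa> i}) / real n"

text \<open>F_2-linear subspaces of W (over F_2, closure under addition plus
  containing 0 is exactly being a linear subspace).\<close>
definition subspace2 :: "nat \<Rightarrow> (nat \<Rightarrow> bool) set \<Rightarrow> bool" where
  "subspace2 \<kappa> S \<longleftrightarrow> S \<subseteq> W \<kappa> \<and> zerov \<in> S \<and> (\<forall>u\<in>S. \<forall>v\<in>S. addv u v \<in> S)"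

text \<open>Xi(W, kappa-1): subspaces of dimension kappa-1; an F_2-subspace has
  dimension d iff it has 2^d elements.\<close>
definition Xi :: "nat \<Rightarrow> (nat \<Rightarrow> bool) set set" where
  "Xi \<kappa> = {S. subspace2 \<kappa> S \<and> card S = 2 ^ (\<kappa> - 1)}"

definition zeta :: "nat \<Rightarrow> (nat \<Rightarrow> bool) set \<Rightarrow> (nat \<Rightarrow> real) \<Rightarrow> real" where
  "zeta \<kappa> S q = (\<Sum>i | i < 2 ^ \<kappa> \<and> nu \<kappa> i \<in> S. q i)"

definition lam :: "nat \<Rightarrow> nat \<Rightarrow> real \<Rightarrow> (nat \<Rightarrow> real) \<Rightarrow> real" where
  "lam \<kappa> n \<epsilon> q =
     (2 - \<epsilon>) ^ n * 2 powr (- real \<kappa>) *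
     (1 + (\<Sum>S\<in>Xi \<kappa>. (\<epsilon> / (2 - \<epsilon>)) powr (real n * (1 - zeta \<kappa> S q)))) - 1"

end

theory Submission
  imports Defs
begin

text \<open>Write r = \<epsilon>/(2-\<epsilon>) \<in> (0,1) and m(G,S) for the number of columns of G outside
  the hyperplane S. Then n(1 - \<zeta>(S,q(G))) = m(G,S), so \<lambda> is an increasing affine function
  of the sum over S of r^m(G,S). Double counting turns the sum over S of m(G,S) into the sum
  over the columns v of G of the number f(v) of hyperplanes avoiding v; f vanishes at 0 and,
  since transvections permute the hyperplanes and act transitively on nonzero vectors, is
  constant on nonzero vectors. Hence the simplex code maximises the sum of the m(G,S), and it
  has m(S) = 2^(\<kappa>-1) for every S. Convexity of x \<mapsto> r^x (a tangent-line bound at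
  2^(\<kappa>-1)) then shows that the constant profile of the simplex code minimises the sum of
  the r^m(G,S).\<close>

lemma W_eq_image_Pow: "W k = (\<lambda>A j. j \<in> A) ` Pow {..<k}"
proof
  show "W k \<subseteq> (\<lambda>A j. j \<in> A) ` Pow {..<k}"
  proof
    fix v assume "v \<in> W k"
    then have "{j. v j} \<subseteq> {..<k}" by (auto simp: W_def not_le[symmetric])
    moreover have "v = (\<lambda>j. j \<in> {j. v j})" by auto
    ultimately show "v \<in> (\<lambda>A j. j \<in> A) ` Pow {..<k}" by blast
  qed
qed (auto simp: W_def)

lemma card_W: "card (W k) = 2 ^ k"
proof -
  have "inj_on (\<lambda>A j. j \<in> A) (Pow {..<k})"
    by (rule inj_onI) (metis Collect_mem_eq)
  then show ?thesis unfolding W_eq_image_Pow by (simp add: card_image card_Pow)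
qed

lemma finite_W: "finite (W k)"
  unfolding W_eq_image_Pow by simp

lemma inj_on_nu: "inj_on (nu k) {..<2 ^ k}"
proof (rule inj_onI)
  fix i i' assume "i \<in> {..<2 ^ k}" "i' \<in> {..<2 ^ k}" and eq: "nu k i = nu k i'"
  then have "take_bit k i = i" "take_bit k i' = i'" by (auto intro: take_bit_nat_eq_self)
  moreover have "m < k \<Longrightarrow> bit i m = bit i' m" for m
    using fun_cong[OF eq, of m] by (simp add: nu_def)
  ultimately show "i = i'"
    by (metis bit_eqI bit_take_bit_iff)
qed

lemma nu_image_eq_W: "nu k ` {..<2 ^ k} = W k"
proof -
  have "nu k ` {..<2 ^ k} \<subseteq> W k" by (auto simp: nu_def W_def)
  moreover have "card (nu k ` {..<2 ^ k}) = card (W k)"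
    using inj_on_nu by (simp add: card_image card_W)
  ultimately show ?thesis using card_subset_eq[OF finite_W] by blast
qed

lemma col_in_W: "col k G c \<in> W k"
  by (auto simp: col_def W_def)

lemma addv_in_W: "u \<in> W k \<Longrightarrow> v \<in> W k \<Longrightarrow> addv u v \<in> W k"
  by (auto simp: W_def addv_def)

lemma Xi_subset_W: "S \<in> Xi k \<Longrightarrow> S \<subseteq> W k"
  by (simp add: Xi_def subspace2_def)

lemma finite_Xi: "finite (Xi k)"
proof -
  have "Xi k \<subseteq> Pow (W k)" using Xi_subset_W by blast
  then show ?thesis using finite_W by (meson finite_Pow_iff finite_subset)
qed

definition cols_outside :: "nat \<Rightarrow> nat \<Rightarrow> (nat \<Rightarrow> nat \<Rightarrow> bool) \<Rightarrow> (nat \<Rightarrow> bool) set \<Rightarrow> nat" where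
  "cols_outside k n G S = card {c. c < n \<and> col k G c \<notin> S}"

lemma n_mult_zeta_qdist:
  assumes "S \<subseteq> W k" "n > 0"
  shows "real n * zeta k S (qdist k n G) = real (card {c. c < n \<and> col k G c \<in> S})"
proof -
  let ?I = "{i. i < 2 ^ k \<and> nu k i \<in> S}"
  let ?A = "\<lambda>i. {c. c < n \<and> col k G c = nu k i}"
  have "real n * zeta k S (qdist k n G) = (\<Sum>i\<in>?I. real (card (?A i)))"
    using assms(2) by (simp add: zeta_def qdist_def sum_distrib_left)
  also have "\<dots> = real (\<Sum>i\<in>?I. card (?A i))" by simp
  also have "(\<Sum>i\<in>?I. card (?A i)) = card (\<Union>i\<in>?I. ?A i)"
    using inj_on_nu by (intro card_UN_disjoint[symmetric]) (auto simp: inj_on_def)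
  also have "(\<Union>i\<in>?I. ?A i) = {c. c < n \<and> col k G c \<in> S}"
  proof (intro equalityI subsetI)
    fix c assume c: "c \<in> {c. c < n \<and> col k G c \<in> S}"
    then have "col k G c \<in> nu k ` {..<2 ^ k}" using col_in_W nu_image_eq_W by blast
    then obtain i where "i < 2 ^ k" "col k G c = nu k i" by auto
    then show "c \<in> (\<Union>i\<in>?I. ?A i)" using c by auto
  qed auto
  finally show ?thesis .
qed

lemma n_mult_one_minus_zeta_qdist:
  assumes "S \<subseteq> W k" "n > 0"
  shows "real n * (1 - zeta k S (qdist k n G)) = real (cols_outside k n G S)"
proof -
  have "{..<n} = {c. c < n \<and> col k G c \<in> S} \<union> {c. c < n \<and> col k G c \<notin> S}" by auto
  then have "n = card {c. c < n \<and> col k G c \<in> S} + cols_outside k n G S"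
    unfolding cols_outside_def
    by (metis (no_types, lifting) card_Un_disjoint card_lessThan disjoint_iff finite_lessThan
        finite_Un mem_Collect_eq)
  then show ?thesis using n_mult_zeta_qdist[OF assms, of G] by (simp add: algebra_simps)
qed

lemma lam_qdist_eq:
  assumes "n > 0"
  shows "lam k n \<epsilon> (qdist k n G) =
    (2 - \<epsilon>) ^ n * 2 powr (- real k) *
      (1 + (\<Sum>S\<in>Xi k. (\<epsilon> / (2 - \<epsilon>)) powr real (cols_outside k n G S))) - 1"
proof -
  have "(\<Sum>S\<in>Xi k. (\<epsilon> / (2 - \<epsilon>)) powr (real n * (1 - zeta k S (qdist k n G))))
      = (\<Sum>S\<in>Xi k. (\<epsilon> / (2 - \<epsilon>)) powr real (cols_outside k n G S))"
    using n_mult_one_minus_zeta_qdist[OF Xi_subset_W assms] by (intro sum.cong) simp_all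
  then show ?thesis by (simp add: lam_def)
qed

subsection \<open>Hyperplanes avoiding a vector\<close>

definition avoiding_hyperplanes :: "nat \<Rightarrow> (nat \<Rightarrow> bool) \<Rightarrow> nat" where
  "avoiding_hyperplanes k v = card {S \<in> Xi k. v \<notin> S}"

text \<open>For \<not> w j this is the transvection x \<mapsto> x + x(j) w, a linear involution of W.\<close>
definition transvection :: "(nat \<Rightarrow> bool) \<Rightarrow> nat \<Rightarrow> (nat \<Rightarrow> bool) \<Rightarrow> (nat \<Rightarrow> bool)" where
  "transvection w j x = (if x j then addv x w else x)"

lemma transvection_transvection: "\<not> w j \<Longrightarrow> transvection w j (transvection w j x) = x"
  by (auto simp: transvection_def addv_def)

lemma inj_transvection: "\<not> w j \<Longrightarrow> inj (transvection w j)"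
  by (metis transvection_transvection injI)

lemma transvection_in_W: "w \<in> W k \<Longrightarrow> x \<in> W k \<Longrightarrow> transvection w j x \<in> W k"
  by (auto simp: transvection_def addv_in_W)

lemma transvection_addv:
  "\<not> w j \<Longrightarrow> transvection w j (addv x y) = addv (transvection w j x) (transvection w j y)"
  by (auto simp: transvection_def addv_def fun_eq_iff)

lemma transvection_zerov: "transvection w j zerov = zerov"
  by (simp add: transvection_def zerov_def)

lemma transvection_image_Xi:
  assumes "\<not> w j" "w \<in> W k" "S \<in> Xi k"
  shows "transvection w j ` S \<in> Xi k"
proof -
  let ?T = "transvection w j"
  have S: "S \<subseteq> W k" "zerov \<in> S" "\<forall>u\<in>S. \<forall>v\<in>S. addv u v \<in> S" "card S = 2 ^ (k - 1)"
    using assms(3) by (auto simp: Xi_def subspace2_def)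
  have "\<forall>u\<in>?T ` S. \<forall>v\<in>?T ` S. addv u v \<in> ?T ` S"
  proof (intro ballI)
    fix x y assume "x \<in> ?T ` S" "y \<in> ?T ` S"
    then obtain a b where "a \<in> S" "b \<in> S" "x = ?T a" "y = ?T b" by blast
    then show "addv x y \<in> ?T ` S"
      using S(3) transvection_addv[of w j, OF assms(1)] by (metis image_eqI)
  qed
  moreover have "card (?T ` S) = 2 ^ (k - 1)"
    using S(4) inj_transvection[of w j, OF assms(1)] by (metis card_image inj_on_subset subset_UNIV)
  moreover have "?T ` S \<subseteq> W k"
    using S(1) transvection_in_W[OF assms(2)] by blast
  moreover have "zerov \<in> ?T ` S"
    using S(2) transvection_zerov by (metis image_eqI)
  ultimately show ?thesis by (simp add: Xi_def subspace2_def)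
qed

lemma avoiding_hyperplanes_transvection:
  assumes "\<not> w j" "w \<in> W k"
  shows "avoiding_hyperplanes k (transvection w j v) = avoiding_hyperplanes k v"
proof -
  let ?T = "transvection w j"
  have invol: "?T (?T x) = x" for x using transvection_transvection[of w j, OF assms(1)] .
  have inj: "inj ?T" using inj_transvection[of w j, OF assms(1)] .
  have image_eq: "image ?T ` {S \<in> Xi k. v \<notin> S} = {S \<in> Xi k. ?T v \<notin> S}"
  proof (intro equalityI subsetI)
    fix S assume "S \<in> image ?T ` {S \<in> Xi k. v \<notin> S}"
    then obtain S' where "S = ?T ` S'" "S' \<in> Xi k" "v \<notin> S'" by blast
    then show "S \<in> {S \<in> Xi k. ?T v \<notin> S}"
      using transvection_image_Xi[OF assms] inj by (simp add: inj_image_mem_iff)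
  next
    fix S assume S: "S \<in> {S \<in> Xi k. ?T v \<notin> S}"
    show "S \<in> image ?T ` {S \<in> Xi k. v \<notin> S}"
    proof (rule image_eqI)
      show "S = ?T ` ?T ` S" by (simp add: image_image invol)
      have "v \<notin> ?T ` S"
      proof
        assume "v \<in> ?T ` S"
        then have "?T v \<in> S" using invol by auto
        with S show False by simp
      qed
      then show "?T ` S \<in> {S \<in> Xi k. v \<notin> S}" using transvection_image_Xi[OF assms] S by simp
    qed
  qed
  have "inj_on (image ?T) {S \<in> Xi k. v \<notin> S}"
    using inj by (meson inj_image_eq_iff inj_onI)
  then have "card (image ?T ` {S \<in> Xi k. v \<notin> S}) = card {S \<in> Xi k. v \<notin> S}"
    by (rule card_image)
  then show ?thesis by (simp add: avoiding_hyperplanes_def image_eq)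
qed

lemma avoiding_hyperplanes_addv:
  assumes "\<not> w j" "w \<in> W k" "x j"
  shows "avoiding_hyperplanes k (addv x w) = avoiding_hyperplanes k x"
  using avoiding_hyperplanes_transvection[OF assms(1,2), of x] assms(3)
  by (simp add: transvection_def)

lemma avoiding_hyperplanes_zerov: "avoiding_hyperplanes k zerov = 0"
proof -
  have "{S \<in> Xi k. zerov \<notin> S} = {}" by (auto simp: Xi_def subspace2_def)
  then show ?thesis unfolding avoiding_hyperplanes_def by (metis card.empty)
qed

lemma avoiding_hyperplanes_nonzero_eq:
  assumes "u \<in> W k" "v \<in> W k" "u \<noteq> zerov" "v \<noteq> zerov"
  shows "avoiding_hyperplanes k u = avoiding_hyperplanes k v"
proof (cases "\<exists>j. u j \<and> v j")
  case True
  then obtain j where j: "u j" "v j" by blast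
  have "v = addv u (addv u v)" "\<not> addv u v j" using j by (auto simp: addv_def)
  then show ?thesis using avoiding_hyperplanes_addv[of "addv u v" j k u] addv_in_W assms j by metis
next
  case False
  obtain j i where j: "u j" and i: "v i" using assms(3,4) by (auto simp: zerov_def fun_eq_iff)
  have "avoiding_hyperplanes k (addv u v) = avoiding_hyperplanes k u"
    using avoiding_hyperplanes_addv[of v j k u] False j assms(2) by blast
  moreover have "avoiding_hyperplanes k (addv (addv u v) u) = avoiding_hyperplanes k (addv u v)"
    using avoiding_hyperplanes_addv[of u i k "addv u v"] False i assms(1)
    by (auto simp: addv_def)
  moreover have "addv (addv u v) u = v" by (auto simp: addv_def)
  ultimately show ?thesis by simp
qed

lemma sum_cols_outside_eq_sum_avoiding_hyperplanes:
  "(\<Sum>S\<in>Xi k. cols_outside k n G S) = (\<Sum>c<n. avoiding_hyperplanes k (col k G c))"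
proof -
  have "(\<Sum>S\<in>Xi k. cols_outside k n G S) = (\<Sum>S\<in>Xi k. \<Sum>c<n. if col k G c \<notin> S then 1 else 0)"
    unfolding cols_outside_def by (simp add: sum.If_cases Collect_conj_eq lessThan_def Int_commute)
  also have "\<dots> = (\<Sum>c<n. \<Sum>S\<in>Xi k. if col k G c \<notin> S then 1 else 0)"
    by (rule sum.swap)
  also have "\<dots> = (\<Sum>c<n. avoiding_hyperplanes k (col k G c))"
    unfolding avoiding_hyperplanes_def by (simp add: sum.If_cases finite_Xi Collect_conj_eq Int_commute)
  finally show ?thesis .
qed

subsection \<open>The simplex code\<close>

lemma cols_outside_simplex:
  assumes "k \<ge> 1" "bij_betw (col k Gsimp) {..<n} (W k - {zerov})" "S \<in> Xi k"
  shows "cols_outside k n Gsimp S = 2 ^ (k - 1)"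
proof -
  have "zerov \<in> S" and card_S: "card S = 2 ^ (k - 1)"
    using assms(3) by (auto simp: Xi_def subspace2_def)
  moreover have "inj_on (col k Gsimp) {..<n}" "col k Gsimp ` {..<n} = W k - {zerov}"
    using assms(2) by (auto simp: bij_betw_def)
  ultimately have "bij_betw (col k Gsimp) {c. c < n \<and> col k Gsimp c \<notin> S} (W k - S)"
    unfolding bij_betw_def by (auto intro: inj_on_subset)
  then have "cols_outside k n Gsimp S = card (W k) - card S"
    using Xi_subset_W[OF assms(3)] finite_W
    by (simp add: cols_outside_def bij_betw_same_card card_Diff_subset finite_subset)
  also have "\<dots> = 2 ^ (k - 1)"
    using assms(1) card_S card_W by (cases k) auto
  finally show ?thesis .
qed

lemma sum_cols_outside_le_simplex:
  assumes "bij_betw (col k Gsimp) {..<n} (W k - {zerov})"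
  shows "(\<Sum>S\<in>Xi k. cols_outside k n G S) \<le> (\<Sum>S\<in>Xi k. cols_outside k n Gsimp S)"
  unfolding sum_cols_outside_eq_sum_avoiding_hyperplanes
proof (rule sum_mono)
  fix c assume "c \<in> {..<n}"
  then have "col k Gsimp c \<in> W k - {zerov}" using assms by (auto simp: bij_betw_def)
  then show "avoiding_hyperplanes k (col k G c) \<le> avoiding_hyperplanes k (col k Gsimp c)"
    using avoiding_hyperplanes_nonzero_eq[OF col_in_W] avoiding_hyperplanes_zerov
    by (metis DiffE insertI1 le_refl zero_le)
qed

subsection \<open>Convexity of the exponential\<close>

lemma powr_ge_tangent:
  assumes "0 < r"
  shows "r powr a * (1 + (x - a) * ln r) \<le> r powr (x :: real)"
proof -
  have "r powr x = r powr a * exp ((x - a) * ln r)"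
    using assms by (simp add: powr_def exp_add[symmetric] algebra_simps)
  then show ?thesis using assms by (simp add: mult_left_mono exp_ge_add_one_self)
qed

lemma card_mult_powr_le_sum_powr:
  fixes f :: "'a \<Rightarrow> real" and a :: real
  assumes "finite A" "0 < r" "r \<le> 1" "(\<Sum>x\<in>A. f x) \<le> card A * a"
  shows "card A * r powr a \<le> (\<Sum>x\<in>A. r powr f x)"
proof -
  have "0 \<le> r powr a * ln r * ((\<Sum>x\<in>A. f x) - card A * a)"
    using assms by (intro mult_nonpos_nonpos) (auto intro: mult_nonneg_nonpos)
  also have "\<dots> + card A * r powr a = (\<Sum>x\<in>A. r powr a * (1 + (f x - a) * ln r))"
    by (simp add: algebra_simps sum.distrib sum_distrib_left sum_distrib_right sum_subtractf)
  also have "\<dots> \<le> (\<Sum>x\<in>A. r powr f x)"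
    using assms(2) by (intro sum_mono powr_ge_tangent)
  finally show ?thesis by simp
qed

theorem corollary3:
  fixes \<kappa> n :: nat and \<epsilon> :: real and Gsimp G :: "nat \<Rightarrow> nat \<Rightarrow> bool"
  assumes "\<kappa> \<ge> 1"
    and "n = 2 ^ \<kappa> - 1"
    and "0 < \<epsilon>" and "\<epsilon> < 1"
    and "bij_betw (col \<kappa> Gsimp) {..<n} (W \<kappa> - {zerov})"
  shows "lam \<kappa> n \<epsilon> (qdist \<kappa> n Gsimp) \<le> lam \<kappa> n \<epsilon> (qdist \<kappa> n G)"
proof -
  have "(2::nat) ^ 1 \<le> 2 ^ \<kappa>" using assms(1) by (intro power_increasing) auto
  then have n_pos: "n > 0" using assms(2) by simp
  define r where "r = \<epsilon> / (2 - \<epsilon>)"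
  have r: "0 < r" "r \<le> 1" using assms(3,4) by (auto simp: r_def field_simps)
  let ?a = "2 ^ (\<kappa> - 1) :: nat"
  have simplex: "cols_outside \<kappa> n Gsimp S = ?a" if "S \<in> Xi \<kappa>" for S
    using cols_outside_simplex[OF assms(1,5) that] .
  have "(\<Sum>S\<in>Xi \<kappa>. cols_outside \<kappa> n G S) \<le> card (Xi \<kappa>) * ?a"
    using sum_cols_outside_le_simplex[OF assms(5), of G] by (simp add: simplex)
  then have "(\<Sum>S\<in>Xi \<kappa>. real (cols_outside \<kappa> n G S)) \<le> card (Xi \<kappa>) * real ?a"
    by (metis of_nat_le_iff of_nat_mult of_nat_sum)
  from card_mult_powr_le_sum_powr[OF finite_Xi r this]
  have "(\<Sum>S\<in>Xi \<kappa>. r powr cols_outside \<kappa> n Gsimp S) \<le> (\<Sum>S\<in>Xi \<kappa>. r powr cols_outside \<kappa> n G S)"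
    by (simp add: simplex)
  then show ?thesis
    using assms(4) by (simp add: lam_qdist_eq[OF n_pos] r_def)
qed

end
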